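(* Let $\mathcal B$ be a nonempty collection of $\mu$-measurable subsets of $2^\omega$ such that for every $B\in\mathcal B$, every clopen $D\subseteq2^\omega$ and every finite binary sequence $t$ with $N_t\cap D=\emptyset$, the set $D\cup t^\frown B$ belongs to $\mathcal B$. Then for every measurable $A\subseteq2^\omega$ and every $\varepsilon>0$ there is $B\in\mathcal B$ with $\mu(A\triangle B)<\varepsilon$; i.e. $\{[B]:B\in\mathcal B\}$ is topologically dense in $\mathrm{MALG}$.
   Context: $2^\omega$ is the Cantor space; $N_t=\{x:t\subset x\}$; $t^\frown B=\{t^\frown x: x\in B\}$ (concatenation). $\mu$ is the coin-tossing measure with $\mu(N_t)=2^{-\mathrm{lh}(t)}$. $\mathrm{MALG}$ is the measure algebra (measurable sets modulo null sets) with metric $\delta([A],[B])=\mu(A\triangle B)$. *)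

theory Defs
  imports "HOL-Probability.Probability"
begin

text \<open>Cantor space is modelled as the type nat \<Rightarrow> bool, with the product
  topology (bool carries the discrete/order topology).\<close>

definition cantor_measure :: "(nat \<Rightarrow> bool) measure" where
  "cantor_measure = (\<Pi>\<^sub>M i\<in>(UNIV::nat set). measure_pmf (bernoulli_pmf (1/2)))"

abbreviation mu_measurable :: "(nat \<Rightarrow> bool) set \<Rightarrow> bool" where
  "mu_measurable A \<equiv> A \<in> sets (completion cantor_measure)"

abbreviation mu :: "(nat \<Rightarrow> bool) set \<Rightarrow> real" where
  "mu A \<equiv> measure (completion cantor_measure) A"

definition cyl :: "bool list \<Rightarrow> (nat \<Rightarrow> bool) set" where
  "cyl t = {x. \<forall>i<length t. x i = t ! i}"

definition conc :: "bool list \<Rightarrow> (nat \<Rightarrow> bool) \<Rightarrow> (nat \<Rightarrow> bool)" where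
  "conc t x = (\<lambda>i. if i < length t then t ! i else x (i - length t))"

definition prepend :: "bool list \<Rightarrow> (nat \<Rightarrow> bool) set \<Rightarrow> (nat \<Rightarrow> bool) set" where
  "prepend t B = conc t ` B"

definition clopen_set :: "(nat \<Rightarrow> bool) set \<Rightarrow> bool" where
  "clopen_set D \<longleftrightarrow> open D \<and> closed D"

end

theory Submission
  imports Defs
begin

(* A mu-measurable set A differs by a null set from a set S of the
   product sigma-algebra, and S is approximated in measure by a clopen set C.
   A cylinder N_t with t long enough has measure below any given bound.
   Cutting N_t out of C and putting the copy t^B of an arbitrary member B of
   the family in its place gives the member (C - N_t) \<union> t^B of the family;
   it differs from A only inside the union of the symmetric difference of S
   and C, a null set and N_t, hence is close to A. *)

section \<open>Approximation by an algebra of sets\<close>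

definition approximable :: "'a measure \<Rightarrow> 'a set set \<Rightarrow> 'a set \<Rightarrow> bool" where
  "approximable M C S \<longleftrightarrow> (\<forall>e>0. \<exists>c\<in>C. measure M (sym_diff S c) < e)"

locale approximating_algebra = finite_measure M for M :: "'a measure" +
  fixes C :: "'a set set"
  assumes C_sets: "C \<subseteq> sets M"
    and empty_in_C: "{} \<in> C"
    and compl_in_C: "c \<in> C \<Longrightarrow> space M - c \<in> C"
    and Un_in_C: "c \<in> C \<Longrightarrow> d \<in> C \<Longrightarrow> c \<union> d \<in> C"
begin

lemma approximable_member: "c \<in> C \<Longrightarrow> approximable M C c"
  unfolding approximable_def by (intro allI impI bexI[of _ c]) auto

lemma approximable_empty: "approximable M C {}"
  using approximable_member[OF empty_in_C] .

text \<open>Complementation preserves the symmetric difference.\<close>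

lemma approximable_compl:
  assumes S: "S \<in> sets M" and approx: "approximable M C S"
  shows "approximable M C (space M - S)"
  unfolding approximable_def
proof (intro allI impI)
  fix e :: real assume "e > 0"
  then obtain c where c: "c \<in> C" and close: "measure M (sym_diff S c) < e"
    using approx unfolding approximable_def by blast
  have "c \<subseteq> space M" using c C_sets sets.sets_into_space by blast
  moreover have "S \<subseteq> space M" using S sets.sets_into_space by blast
  ultimately have "sym_diff (space M - S) (space M - c) = sym_diff S c" by blast
  then show "\<exists>c'\<in>C. measure M (sym_diff (space M - S) c') < e"
    using close compl_in_C[OF c] by metis
qed

text \<open>The symmetric difference of two unions lies in the union of the
  symmetric differences, so errors add up.\<close>

lemma approximable_Un:
  assumes S: "S \<in> sets M" and T: "T \<in> sets M"
    and approx_S: "approximable M C S" and approx_T: "approximable M C T"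
  shows "approximable M C (S \<union> T)"
  unfolding approximable_def
proof (intro allI impI)
  fix e :: real assume "e > 0"
  then obtain c d where c: "c \<in> C" "measure M (sym_diff S c) < e / 2"
    and d: "d \<in> C" "measure M (sym_diff T d) < e / 2"
    using approx_S approx_T unfolding approximable_def by (meson half_gt_zero)
  have cd: "c \<in> sets M" "d \<in> sets M" using c d C_sets by auto
  have "measure M (sym_diff (S \<union> T) (c \<union> d)) \<le> measure M (sym_diff S c \<union> sym_diff T d)"
    using S T cd by (intro finite_measure_mono) auto
  also have "\<dots> \<le> measure M (sym_diff S c) + measure M (sym_diff T d)"
    using S T cd by (intro measure_Un_le) auto
  also have "\<dots> < e" using c d by linarith
  finally show "\<exists>c'\<in>C. measure M (sym_diff (S \<union> T) c') < e"
    using Un_in_C[OF c(1) d(1)] by blast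
qed

lemma approximable_UN_lessThan:
  fixes a :: "nat \<Rightarrow> 'a set" and n :: nat
  assumes "\<And>i. a i \<in> sets M" and "\<And>i. approximable M C (a i)"
  shows "approximable M C (\<Union>i<n. a i)"
proof (induction n)
  case 0 show ?case by (simp add: approximable_empty)
next
  case (Suc n)
  have "(\<Union>i<Suc n. a i) = (\<Union>i<n. a i) \<union> a n" by (auto simp: lessThan_Suc)
  then show ?case using Suc assms by (auto intro!: approximable_Un)
qed

lemma approximable_limit:
  assumes S: "S \<in> sets M"
    and near: "\<And>e. e > 0 \<Longrightarrow> \<exists>T\<in>sets M. approximable M C T \<and> measure M (sym_diff S T) < e"
  shows "approximable M C S"
  unfolding approximable_def
proof (intro allI impI)
  fix e :: real assume "e > 0"
  then obtain T where T: "T \<in> sets M" "approximable M C T" "measure M (sym_diff S T) < e / 2"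
    using near[of "e / 2"] by auto
  then obtain c where c: "c \<in> C" "measure M (sym_diff T c) < e / 2"
    using \<open>e > 0\<close> unfolding approximable_def by (meson half_gt_zero)
  have "c \<in> sets M" using c C_sets by auto
  then have "measure M (sym_diff S c) \<le> measure M (sym_diff S T \<union> sym_diff T c)"
    using S T by (intro finite_measure_mono) auto
  also have "\<dots> \<le> measure M (sym_diff S T) + measure M (sym_diff T c)"
    using S T \<open>c \<in> sets M\<close> by (intro measure_Un_le) auto
  also have "\<dots> < e" using T c by linarith
  finally show "\<exists>c\<in>C. measure M (sym_diff S c) < e" using c by blast
qed

text \<open>Countable unions: by continuity from below, a countable union is the
  limit of its finite partial unions.\<close>

lemma approximable_UN:
  fixes a :: "nat \<Rightarrow> 'a set"
  assumes a: "\<And>i. a i \<in> sets M" and approx: "\<And>i. approximable M C (a i)"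
  shows "approximable M C (\<Union>i. a i)"
proof (rule approximable_limit)
  let ?S = "\<Union>i. a i"
  show S: "?S \<in> sets M" using a by (simp add: sets.countable_UN)
  fix e :: real assume "e > 0"
  define F where "F n = (\<Union>i<n. a i)" for n
  have F: "F n \<in> sets M" "F n \<subseteq> ?S" for n unfolding F_def using a by auto
  have "incseq F" unfolding F_def incseq_def by (meson UN_mono lessThan_subset_iff order_refl)
  moreover have "(\<Union>n. F n) = ?S" unfolding F_def by blast
  ultimately have "(\<lambda>n. measure M (F n)) \<longlonglongrightarrow> measure M ?S"
    using finite_Lim_measure_incseq[of F] F by auto
  then have "eventually (\<lambda>n. measure M (F n) > measure M ?S - e) sequentially"
    using \<open>e > 0\<close> by (intro order_tendstoD(1)) auto
  then obtain n where n: "measure M (F n) > measure M ?S - e"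
    by (auto simp: eventually_sequentially)
  have "sym_diff ?S (F n) = ?S - F n" using F(2) by blast
  moreover have "measure M (?S - F n) = measure M ?S - measure M (F n)"
    using finite_measure_Diff S F by blast
  ultimately have close: "measure M (sym_diff ?S (F n)) < e" using n by simp
  have "approximable M C (F n)"
    unfolding F_def using a approx by (rule approximable_UN_lessThan)
  with F(1) close show "\<exists>T\<in>sets M. approximable M C T \<and> measure M (sym_diff ?S T) < e"
    by (intro bexI[of _ "F n"] conjI)
qed

theorem approximable_sets:
  assumes generated: "sets M = sigma_sets (space M) G" and "G \<subseteq> C"
    and S: "S \<in> sets M"
  shows "approximable M C S"
proof -
  have "S \<in> sigma_sets (space M) G" using S generated by simp
  then show ?thesis
  proof (induction rule: sigma_sets.induct)
    case (Basic g) then show ?case using \<open>G \<subseteq> C\<close> approximable_member by blast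
  next
    case Empty then show ?case by (rule approximable_empty)
  next
    case (Compl a) then show ?case using generated by (auto intro: approximable_compl)
  next
    case (Union a) then show ?case using generated by (auto intro: approximable_UN)
  qed
qed

end

section \<open>Cantor space\<close>

abbreviation fair_coin :: "bool measure" where
  "fair_coin \<equiv> measure_pmf (bernoulli_pmf (1/2))"

lemma space_cantor_measure [simp]: "space cantor_measure = UNIV"
  by (simp add: cantor_measure_def space_PiM)

lemma prob_space_cantor_measure: "prob_space cantor_measure"
  unfolding cantor_measure_def by (rule prob_space_PiM) (simp add: prob_space_measure_pmf)

lemma sets_cantor_measure:
  "sets cantor_measure = sigma_sets UNIV (prod_algebra UNIV (\<lambda>_. fair_coin))"
  unfolding cantor_measure_def sets_PiM by simp

lemma clopen_finite_box:
  assumes "finite J"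
  shows "clopen_set {x::nat \<Rightarrow> bool. \<forall>j\<in>J. x j \<in> X j}"
proof -
  have box: "{x::nat \<Rightarrow> bool. \<forall>j\<in>J. x j \<in> X j} = (\<Inter>j\<in>J. (\<lambda>x. x j) -` X j)" by auto
  have "open ((\<lambda>x::nat \<Rightarrow> bool. x j) -` Y)" for j Y
    using discrete_topology_class.open_discrete[of Y] by (intro continuous_intros) auto
  then have "open ((\<lambda>x::nat \<Rightarrow> bool. x j) -` X j) \<and> closed ((\<lambda>x::nat \<Rightarrow> bool. x j) -` X j)" for j
    by (metis closed_open vimage_Compl)
  then show ?thesis unfolding clopen_set_def box using assms by (auto intro!: open_INT closed_INT)
qed

lemma clopen_Diff: "clopen_set A \<Longrightarrow> clopen_set B \<Longrightarrow> clopen_set (A - B)"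
  unfolding clopen_set_def by (auto intro: open_Diff closed_Diff)

lemma clopen_Un: "clopen_set A \<Longrightarrow> clopen_set B \<Longrightarrow> clopen_set (A \<union> B)"
  unfolding clopen_set_def by auto

interpretation cantor_clopen: approximating_algebra cantor_measure
  "{c. clopen_set c \<and> c \<in> sets cantor_measure}"
proof (rule approximating_algebra.intro)
  show "finite_measure cantor_measure"
    using prob_space_cantor_measure by (simp add: prob_space_def)
  have "clopen_set (UNIV :: (nat \<Rightarrow> bool) set)" by (simp add: clopen_set_def)
  then show "approximating_algebra_axioms cantor_measure {c. clopen_set c \<and> c \<in> sets cantor_measure}"
    by unfold_locales (auto simp: clopen_set_def[of "{}"] intro: clopen_Diff clopen_Un sets.compl_sets[of _ cantor_measure, simplified])
qed

lemma prod_algebra_clopen: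
  assumes "S \<in> prod_algebra UNIV (\<lambda>_. fair_coin)"
  shows "clopen_set S \<and> S \<in> sets cantor_measure"
proof -
  obtain J X where J: "finite J" and S: "S = prod_emb UNIV (\<lambda>_. fair_coin) J (\<Pi>\<^sub>E j\<in>J. X j)"
    using assms unfolding prod_algebra_def by auto
  have "S = {x. \<forall>j\<in>J. x j \<in> X j}"
    unfolding S prod_emb_def by (auto simp: PiE_def Pi_def)
  then show ?thesis
    using clopen_finite_box[OF J] assms sets_cantor_measure by auto
qed

corollary clopen_approximation:
  assumes "S \<in> sets cantor_measure" and "e > 0"
  obtains c where "clopen_set c" "c \<in> sets cantor_measure"
    "measure cantor_measure (sym_diff S c) < e"
proof -
  have "approximable cantor_measure {c. clopen_set c \<and> c \<in> sets cantor_measure} S"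
    using prod_algebra_clopen sets_cantor_measure assms(1)
    by (intro cantor_clopen.approximable_sets) auto
  then show ?thesis using that assms(2) unfolding approximable_def by blast
qed

lemma cyl_prod_emb:
  "cyl t = prod_emb UNIV (\<lambda>_. fair_coin) {..<length t} (\<Pi>\<^sub>E j\<in>{..<length t}. {t ! j})"
  unfolding cyl_def prod_emb_def by (auto simp: PiE_iff restrict_def extensional_def)

lemma clopen_cyl: "clopen_set (cyl t)"
proof -
  have "cyl t = {x. \<forall>j\<in>{..<length t}. x j \<in> {t ! j}}" unfolding cyl_def by auto
  then show ?thesis using clopen_finite_box[of "{..<length t}" "\<lambda>j. {t ! j}"] by simp
qed

lemma sets_cyl: "cyl t \<in> sets cantor_measure"
  unfolding cyl_prod_emb cantor_measure_def by (rule sets_PiM_I) auto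

lemma measure_cyl: "measure cantor_measure (cyl t) = (1/2) ^ length t"
proof -
  have "emeasure cantor_measure (cyl t) = (\<Prod>j\<in>{..<length t}. emeasure fair_coin {t ! j})"
    unfolding cyl_prod_emb cantor_measure_def
    by (rule emeasure_PiM_emb) (auto simp: prob_space_measure_pmf)
  also have "\<dots> = ennreal ((1/2) ^ length t)"
  proof -
    have fair: "emeasure fair_coin {b} = ennreal (1/2)" for b
      by (cases b) (simp_all add: emeasure_pmf_single)
    show ?thesis by (simp only: fair prod_constant card_lessThan ennreal_power)
  qed
  finally show ?thesis by (simp add: measure_def)
qed

lemma prepend_subset_cyl: "prepend t B \<subseteq> cyl t"
  unfolding prepend_def cyl_def conc_def by auto

theorem lemma2p1:
  fixes \<B> :: "(nat \<Rightarrow> bool) set set" and A :: "(nat \<Rightarrow> bool) set" and \<epsilon> :: real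
  assumes "\<B> \<noteq> {}"
    and "\<forall>B\<in>\<B>. mu_measurable B"
    and "\<forall>B\<in>\<B>. \<forall>D t. clopen_set D \<and> cyl t \<inter> D = {} \<longrightarrow> D \<union> prepend t B \<in> \<B>"
    and "mu_measurable A"
    and "\<epsilon> > 0"
  shows "\<exists>B\<in>\<B>. mu ((A - B) \<union> (B - A)) < \<epsilon>"
proof -
  interpret completion: prob_space "completion cantor_measure"
    by (rule prob_space.prob_space_completion[OF prob_space_cantor_measure])
  obtain S N N' where A: "A = S \<union> N" "N \<subseteq> N'" and N': "N' \<in> null_sets cantor_measure"
      and S: "S \<in> sets cantor_measure"
    using assms(4) by (rule sets_completionE)
  obtain C where C: "clopen_set C" "C \<in> sets cantor_measure"
      and SC: "measure cantor_measure (sym_diff S C) < \<epsilon> / 2"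
    by (rule clopen_approximation[OF S half_gt_zero[OF assms(5)]])
  obtain k where k: "(1/2::real) ^ k < \<epsilon> / 2"
    using real_arch_pow_inv[of "\<epsilon> / 2" "1/2"] assms(5) by auto
  define t where "t = replicate k False"
  obtain B0 where B0: "B0 \<in> \<B>" using assms(1) by auto
  have "clopen_set (C - cyl t) \<and> cyl t \<inter> (C - cyl t) = {}"
    using clopen_Diff[OF C(1) clopen_cyl] by blast
  then have B: "(C - cyl t) \<union> prepend t B0 \<in> \<B>" (is "?B \<in> \<B>")
    using assms(3)[rule_format, OF B0] by blast
  define R where "R = sym_diff S C \<union> cyl t"
  have R: "R \<in> sets cantor_measure" unfolding R_def using S C(2) sets_cyl by auto
  have RN: "R \<union> N' \<in> sets cantor_measure"
    using R null_setsD2[OF N'] by (rule sets.Un)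
  have "sym_diff A ?B \<subseteq> R \<union> N'"
    unfolding R_def A(1) using A(2) prepend_subset_cyl[of t B0] by auto
  then have "mu (sym_diff A ?B) \<le> mu (R \<union> N')"
    using sets_completionI_sets[OF RN] by (rule completion.finite_measure_mono)
  also have "\<dots> = measure cantor_measure (R \<union> N')" using RN by (rule measure_completion)
  also have "\<dots> = measure cantor_measure R" using R N' by (rule measure_Un_null_set)
  also have "\<dots> \<le> measure cantor_measure (sym_diff S C) + measure cantor_measure (cyl t)"
    unfolding R_def using S C(2) sets_cyl by (intro measure_Un_le) auto
  also have "\<dots> < \<epsilon>" using SC k by (simp add: measure_cyl t_def)
  finally show ?thesis using B by blast
qed

end
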